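(* Let $p<q$ be positive integers, let $\boldsymbol\alpha\in\mathbb C^p$ be a unit vector, $\boldsymbol\beta=\mathrm{FT}_p(\boldsymbol\alpha)$ and $\boldsymbol\gamma=\mathrm{FT}_q(\boldsymbol\alpha)$. Let $S\subseteq[p]$, let $0<\delta\le 1$ and $r>0$. Suppose that $\boldsymbol\beta_S$ is $\delta$-uniform and $\|\boldsymbol\beta_S\|_2^2=c$. Then if $q>\left(\frac{3200\,r\ln p}{\delta\sqrt c}\right)p$, $$\|\boldsymbol\gamma_{S'}\|_2^2\geq \frac{p}{q}\,\delta^2\left(1-\frac{1}{100r}\right)c .$$
   Context: Write $[N]=\{0,\dots,N-1\}$ and $\omega_N=e^{2\pi i/N}$. For $N\ge p$, $\mathrm{FT}_N(\boldsymbol\alpha)=\sum_{c=0}^{N-1}\left(\frac{1}{\sqrt N}\sum_{i=0}^{p-1}\omega_N^{ic}\alpha_i\right)|c\rangle\in\mathbb C^N$. Write $\boldsymbol\beta=(\beta_i)_{i\in[p]}$, $\boldsymbol\gamma=(\gamma_i)_{i\in[q]}$. For $i\in[p]$, $i'=\lfloor\frac qp i\rfloor$, and $S'=\{s':s\in S\}\subseteq[q]$. For a vector $\boldsymbol\zeta$ and an index set $T$, $\boldsymbol\zeta_T$ is the vector agreeing with $\boldsymbol\zeta$ on indices in $T$ and zero elsewhere. $\|\cdot\|_2$ is the Euclidean norm. A vector $\boldsymbol\zeta$ is $\delta$-uniform if for all $i,j$ with $\zeta_i,\zeta_j$ both nonzero, $\delta\le |\zeta_i|/|\zeta_j|\le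 1/\delta$. *)

theory Defs
  imports "HOL-Analysis.Analysis"
begin

text \<open>Vectors in C^n are represented as functions nat => complex, only indices < n matter.\<close>

definition omega :: "nat \<Rightarrow> complex" where
  "omega N = exp (2 * of_real pi * \<i> / of_nat N)"

definition FT :: "nat \<Rightarrow> nat \<Rightarrow> (nat \<Rightarrow> complex) \<Rightarrow> nat \<Rightarrow> complex" where
  "FT N p \<alpha> c = (if c < N then
      (1 / of_real (sqrt (real N))) * (\<Sum>i<p. omega N ^ (i * c) * \<alpha> i) else 0)"

definition restrict_vec :: "(nat \<Rightarrow> complex) \<Rightarrow> nat set \<Rightarrow> nat \<Rightarrow> complex" where
  "restrict_vec \<zeta> T i = (if i \<in> T then \<zeta> i else 0)"

definition sqnorm :: "nat \<Rightarrow> (nat \<Rightarrow> complex) \<Rightarrow> real" where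
  "sqnorm n \<zeta> = (\<Sum>i<n. (cmod (\<zeta> i))\<^sup>2)"

definition prime_idx :: "nat \<Rightarrow> nat \<Rightarrow> nat \<Rightarrow> nat" where
  "prime_idx p q i = nat \<lfloor>real q / real p * real i\<rfloor>"

definition delta_uniform :: "nat \<Rightarrow> real \<Rightarrow> (nat \<Rightarrow> complex) \<Rightarrow> bool" where
  "delta_uniform n \<delta> \<zeta> \<longleftrightarrow> (\<forall>i<n. \<forall>j<n. \<zeta> i \<noteq> 0 \<and> \<zeta> j \<noteq> 0 \<longrightarrow>
      \<delta> \<le> cmod (\<zeta> i) / cmod (\<zeta> j) \<and> cmod (\<zeta> i) / cmod (\<zeta> j) \<le> 1 / \<delta>)"

end

(* Let s' = floor (q s / p). Then omega_q^(i s') = omega_p^(i s) * exp (i * z_s) for every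
   index i, where z_s is imaginary with |z_s| <= 2 pi / q, so expanding the exponential turns the unnormalised transform of alpha
   at s' into sum_k z_s^k / k! times the length-p DFT of (i^k alpha_i) at s. By Parseval each
   of these DFTs has l2-norm at most sqrt p (p - 1)^k, so on S the vector
   (sqrt q gamma_s')_s differs from (sqrt p beta_s)_s by at most sqrt p (exp (2 pi (p-1)/q) - 1)
   in l2-norm, which the hypothesis on q makes at most sqrt (p c) / (200 r). The triangle
   inequality then gives |gamma_S'|^2 >= (p/q) c (1 - 1/(200 r))^2. *)

theory Submission
  imports Defs "HOL-Analysis.Harmonic_Numbers"
begin

definition dft :: "nat \<Rightarrow> nat \<Rightarrow> (nat \<Rightarrow> complex) \<Rightarrow> nat \<Rightarrow> complex" where
  "dft N n v c = (\<Sum>i<n. omega N ^ (i * c) * v i)"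

lemma FT_eq_dft: "c < N \<Longrightarrow> FT N n v c = dft N n v c / sqrt (real N)"
  by (simp add: FT_def dft_def)

lemma omega_power: "omega N ^ k = exp (2 * of_real pi * \<i> * of_nat k / of_nat N)"
  by (simp add: omega_def mult_ac flip: exp_of_nat_mult)

lemma norm_omega_power [simp]: "cmod (omega N ^ k) = 1"
  by (simp add: omega_power norm_exp_eq_Re)

lemma omega_power_eq_iff: "0 < N \<Longrightarrow> omega N ^ i = omega N ^ j \<longleftrightarrow> i mod N = j mod N"
  by (simp add: omega_power complex_root_unity_eq)

lemma sum_omega_orthogonal:
  assumes "i < N" "j < N"
  shows "(\<Sum>s<N. omega N ^ (i * s) * cnj (omega N ^ (j * s))) = (if i = j then of_nat N else 0)"
proof -
  define w where "w = omega N ^ i / omega N ^ j"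
  have "omega N ^ j \<noteq> 0"
    using norm_omega_power[of N j] by force
  have terms: "omega N ^ (i * s) * cnj (omega N ^ (j * s)) = w ^ s" for s
    by (simp add: w_def divide_conv_cnj power_mult power_mult_distrib flip: power_mult_distrib)
  show ?thesis
  proof (cases "i = j")
    case True
    then have "w = 1"
      using \<open>omega N ^ j \<noteq> 0\<close> by (simp add: w_def)
    with True show ?thesis
      unfolding terms by simp
  next
    case False
    then have "w \<noteq> 1"
      using omega_power_eq_iff[of N i j] assms \<open>omega N ^ j \<noteq> 0\<close> by (auto simp: w_def)
    have "omega N ^ N = 1"
      using assms by (simp add: omega_power)
    then have "w ^ N = 1"
      using \<open>omega N ^ j \<noteq> 0\<close>
      by (simp add: w_def power_divide flip: power_mult) (simp add: power_mult mult.commute[of _ N])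
    with \<open>w \<noteq> 1\<close> False show ?thesis
      unfolding terms by (simp add: geometric_sum)
  qed
qed

lemma dft_parseval:
  "(\<Sum>s<N. (cmod (dft N N v s))\<^sup>2) = real N * (\<Sum>i<N. (cmod (v i))\<^sup>2)"
proof -
  have "complex_of_real (\<Sum>s<N. (cmod (dft N N v s))\<^sup>2)
      = (\<Sum>s<N. \<Sum>i<N. \<Sum>j<N. v i * cnj (v j) * (omega N ^ (i * s) * cnj (omega N ^ (j * s))))"
    unfolding of_real_sum complex_norm_square dft_def cnj_sum sum_product
    by (intro sum.cong refl) (simp add: algebra_simps)
  also have "\<dots> = (\<Sum>i<N. \<Sum>j<N. v i * cnj (v j) * (\<Sum>s<N. omega N ^ (i * s) * cnj (omega N ^ (j * s))))"
    by (subst sum.swap) (rule sum.cong[OF refl], subst sum.swap, simp add: sum_distrib_left)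
  also have "\<dots> = (\<Sum>i<N. \<Sum>j<N. v i * cnj (v j) * (if i = j then of_nat N else 0))"
    by (intro sum.cong refl) (simp only: sum_omega_orthogonal lessThan_iff)
  also have "\<dots> = (\<Sum>i<N. of_nat N * (v i * cnj (v i)))"
    by (simp add: if_distrib mult.commute cong: if_cong)
  also have "\<dots> = complex_of_real (real N * (\<Sum>i<N. (cmod (v i))\<^sup>2))"
    by (simp add: sum_distrib_left flip: complex_norm_square)
  finally show ?thesis
    using of_real_eq_iff by blast
qed

lemma L2_set_mono2: "finite B \<Longrightarrow> A \<subseteq> B \<Longrightarrow> L2_set f A \<le> L2_set f B"
  unfolding L2_set_def by (intro real_sqrt_le_mono sum_mono2) auto

lemma L2_set_dft_weighted_le:
  assumes "S \<subseteq> {..<N}"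
  shows "L2_set (\<lambda>s. cmod (dft N N (\<lambda>i. of_nat i ^ k * v i) s)) S
           \<le> sqrt (real N) * real (N - 1) ^ k * sqrt (sqnorm N v)"
proof -
  have "L2_set (\<lambda>s. cmod (dft N N (\<lambda>i. of_nat i ^ k * v i) s)) S
      \<le> L2_set (\<lambda>s. cmod (dft N N (\<lambda>i. of_nat i ^ k * v i) s)) {..<N}"
    using assms by (intro L2_set_mono2) auto
  also have "\<dots> = sqrt (real N * (\<Sum>i<N. (real i ^ k * cmod (v i))\<^sup>2))"
    by (simp add: L2_set_def dft_parseval norm_mult norm_power)
  also have "\<dots> \<le> sqrt (real N * (\<Sum>i<N. (real (N - 1) ^ k * cmod (v i))\<^sup>2))"
    by (intro real_sqrt_le_mono mult_left_mono sum_mono power_mono mult_right_mono) auto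
  also have "\<dots> = sqrt (real N) * real (N - 1) ^ k * sqrt (sqnorm N v)"
    by (cases "N = 0")
      (simp_all add: sqnorm_def power_mult_distrib real_sqrt_mult of_nat_diff flip: sum_distrib_left)
  finally show ?thesis .
qed

lemma sqnorm_nonneg: "0 \<le> sqnorm n v"
  by (simp add: sqnorm_def sum_nonneg)

lemma sqnorm_restrict_vec:
  "T \<subseteq> {..<n} \<Longrightarrow> sqnorm n (restrict_vec \<zeta> T) = (\<Sum>i\<in>T. (cmod (\<zeta> i))\<^sup>2)"
  unfolding sqnorm_def
  by (rule sum.mono_neutral_cong_right) (auto simp: restrict_vec_def)

lemma prime_idx_frac_bounds:
  "0 \<le> real q / real p * real s - real (prime_idx p q s)"
  "real q / real p * real s - real (prime_idx p q s) < 1"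
proof -
  have "real q / real p * real s - real (prime_idx p q s) = frac (real q / real p * real s)"
    by (simp add: prime_idx_def frac_def)
  then show "0 \<le> real q / real p * real s - real (prime_idx p q s)"
    "real q / real p * real s - real (prime_idx p q s) < 1"
    by (simp_all add: frac_lt_1)
qed

lemma prime_idx_less:
  assumes "0 < q" "s < p"
  shows "prime_idx p q s < q"
proof -
  have "real (prime_idx p q s) \<le> real q / real p * real s"
    using prime_idx_frac_bounds(1)[of q p s] by simp
  also have "\<dots> < real q"
    using assms by (simp add: field_simps)
  finally show ?thesis
    by simp
qed

lemma inj_on_prime_idx: "p \<le> q \<Longrightarrow> inj_on (prime_idx p q) {..<p}"
proof (rule linorder_inj_onI)
  fix s t assume "p \<le> q" "s < t" "t \<in> {..<p}"
  then have "1 \<le> real q / real p"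
    by simp
  then have "real q / real p * real s + 1 \<le> real q / real p * (real s + 1)"
    by (simp add: distrib_left)
  also have "\<dots> \<le> real q / real p * real t"
    using \<open>s < t\<close> by (intro mult_left_mono) auto
  finally show "prime_idx p q s \<noteq> prime_idx p q t"
    using prime_idx_frac_bounds[of q p s] prime_idx_frac_bounds[of q p t] by linarith
qed auto

lemma omega_power_shift:
  assumes "0 < p" "0 < q" "real m = real q / real p * real s - \<theta>"
  shows "omega q ^ (i * m) = omega p ^ (i * s) * exp (of_nat i * (\<i> * of_real (- 2 * pi * \<theta> / real q)))"
proof -
  have m: "(of_nat m :: complex) = of_nat q / of_nat p * of_nat s - of_real \<theta>"
    using arg_cong[OF assms(3), of complex_of_real] by simp
  have "2 * of_real pi * \<i> * of_nat (i * m) / of_nat q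
      = 2 * of_real pi * \<i> * of_nat (i * s) / of_nat p + of_nat i * (\<i> * of_real (- 2 * pi * \<theta> / real q))"
    unfolding of_nat_mult m using assms(1,2) by (simp add: field_simps)
  then show ?thesis
    by (simp add: omega_power flip: exp_add)
qed

lemma dft_prime_idx_taylor:
  assumes "0 < p" "0 < q"
  obtains z where "cmod z \<le> 2 * pi / real q"
    and "(\<lambda>k. z ^ k / fact k * dft p p (\<lambda>i. of_nat i ^ k * v i) s) sums dft q p v (prime_idx p q s)"
proof
  define \<theta> where "\<theta> = real q / real p * real s - real (prime_idx p q s)"
  define z where "z = \<i> * complex_of_real (- 2 * pi * \<theta> / real q)"
  have "0 \<le> \<theta>" "\<theta> < 1"
    unfolding \<theta>_def by (rule prime_idx_frac_bounds)+
  moreover have "cmod z = 2 * pi * \<theta> / real q"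
    using \<open>0 \<le> \<theta>\<close> by (simp add: z_def norm_mult norm_divide)
  ultimately show "cmod z \<le> 2 * pi / real q"
    by (simp add: divide_right_mono)
  have shift: "omega q ^ (i * prime_idx p q s) = omega p ^ (i * s) * exp (of_nat i * z)" for i
    unfolding z_def by (rule omega_power_shift[OF assms]) (simp add: \<theta>_def)
  have "(\<lambda>k. omega p ^ (i * s) * v i * ((of_nat i * z) ^ k /\<^sub>R fact k))
      sums (omega q ^ (i * prime_idx p q s) * v i)" for i
    using sums_mult[OF exp_converges[of "of_nat i * z"], of "omega p ^ (i * s) * v i"]
    by (simp add: shift mult_ac)
  then have "(\<lambda>k. \<Sum>i<p. omega p ^ (i * s) * v i * ((of_nat i * z) ^ k /\<^sub>R fact k))
      sums dft q p v (prime_idx p q s)"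
    unfolding dft_def by (rule sums_sum)
  then show "(\<lambda>k. z ^ k / fact k * dft p p (\<lambda>i. of_nat i ^ k * v i) s) sums dft q p v (prime_idx p q s)"
    by (simp add: dft_def sum_distrib_left scaleR_conv_of_real power_mult_distrib field_simps)
qed

(* Pair with g itself: |g|^2 = sum_k <g, f_k> <= |g| * sum_k b_k by Cauchy-Schwarz. *)
lemma L2_set_sums_le:
  fixes f :: "nat \<Rightarrow> 'a \<Rightarrow> complex"
  assumes "finite S" "\<And>s. s \<in> S \<Longrightarrow> (\<lambda>k. f k s) sums g s" "b sums B"
    and "\<And>k. L2_set (\<lambda>s. cmod (f k s)) S \<le> b k"
  shows "L2_set (\<lambda>s. cmod (g s)) S \<le> B"
proof -
  define E where "E = L2_set (\<lambda>s. cmod (g s)) S"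
  have "(\<lambda>k. \<Sum>s\<in>S. cnj (g s) * f k s) sums (\<Sum>s\<in>S. cnj (g s) * g s)"
    using assms(2) by (intro sums_sum sums_mult)
  also have "(\<Sum>s\<in>S. cnj (g s) * g s) = of_real (E\<^sup>2)"
    using assms(1) by (simp add: E_def L2_set_def sum_nonneg mult.commute flip: complex_norm_square)
  finally have series: "(\<lambda>k. \<Sum>s\<in>S. cnj (g s) * f k s) sums of_real (E\<^sup>2)" .
  have bound: "norm (\<Sum>s\<in>S. cnj (g s) * f k s) \<le> E * b k" for k
  proof -
    have "norm (\<Sum>s\<in>S. cnj (g s) * f k s) \<le> (\<Sum>s\<in>S. \<bar>cmod (g s)\<bar> * \<bar>cmod (f k s)\<bar>)"
      using norm_sum[of "\<lambda>s. cnj (g s) * f k s" S] by (simp add: norm_mult)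
    also have "\<dots> \<le> E * L2_set (\<lambda>s. cmod (f k s)) S"
      unfolding E_def by (rule L2_set_mult_ineq)
    also have "\<dots> \<le> E * b k"
      using assms(4) by (simp add: E_def mult_left_mono)
    finally show ?thesis .
  qed
  have "norm (complex_of_real (E\<^sup>2)) \<le> E * B"
    by (rule norm_sums_le[OF series sums_mult[OF assms(3)] bound])
  then have "E\<^sup>2 \<le> E * B"
    by (simp add: norm_power)
  have "0 \<le> B"
    using assms(3,4) order_trans[OF L2_set_nonneg assms(4)] by (auto intro: sums_le[of "\<lambda>_. 0"])
  have "E \<le> B"
  proof (rule ccontr)
    assume "\<not> E \<le> B"
    with \<open>0 \<le> B\<close> have "E * B < E * E"
      by (intro mult_strict_left_mono) auto
    with \<open>E\<^sup>2 \<le> E * B\<close> show False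
      by (simp add: power2_eq_square)
  qed
  then show ?thesis
    by (simp add: E_def)
qed

lemma L2_set_dft_taylor_term_le:
  assumes "S \<subseteq> {..<p}" "0 \<le> \<rho>" "\<And>s. s \<in> S \<Longrightarrow> cmod (z s) \<le> \<rho>"
  shows "L2_set (\<lambda>s. cmod (z s ^ k / fact k * dft p p (\<lambda>i. of_nat i ^ k * v i) s)) S
           \<le> sqrt (real p) * sqrt (sqnorm p v) * ((\<rho> * real (p - 1)) ^ k / fact k)"
proof -
  define C where "C = \<rho> ^ k / fact k"
  have "cmod (z s ^ k / fact k * dft p p (\<lambda>i. of_nat i ^ k * v i) s)
      \<le> C * cmod (dft p p (\<lambda>i. of_nat i ^ k * v i) s)" if "s \<in> S" for s
    using power_mono[OF assms(3)[OF that] norm_ge_zero, of k]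
    by (simp add: C_def norm_mult norm_divide norm_power divide_right_mono mult_right_mono)
  then have "L2_set (\<lambda>s. cmod (z s ^ k / fact k * dft p p (\<lambda>i. of_nat i ^ k * v i) s)) S
      \<le> L2_set (\<lambda>s. C * cmod (dft p p (\<lambda>i. of_nat i ^ k * v i) s)) S"
    by (intro L2_set_mono) auto
  also have "\<dots> = C * L2_set (\<lambda>s. cmod (dft p p (\<lambda>i. of_nat i ^ k * v i) s)) S"
    using assms(2) by (intro L2_set_right_distrib[symmetric]) (simp add: C_def)
  also have "\<dots> \<le> C * (sqrt (real p) * real (p - 1) ^ k * sqrt (sqnorm p v))"
    using L2_set_dft_weighted_le[OF assms(1), of k v] assms(2)
    by (intro mult_left_mono) (simp_all add: C_def)
  also have "\<dots> = sqrt (real p) * sqrt (sqnorm p v) * ((\<rho> * real (p - 1)) ^ k / fact k)"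
    by (simp add: C_def power_mult_distrib)
  finally show ?thesis .
qed

lemma L2_set_dft_prime_idx_diff_le:
  assumes "0 < p" "0 < q" "S \<subseteq> {..<p}"
  shows "L2_set (\<lambda>s. cmod (dft q p v (prime_idx p q s) - dft p p v s)) S
           \<le> sqrt (real p) * (exp (2 * pi * real (p - 1) / real q) - 1) * sqrt (sqnorm p v)"
proof -
  define a where "a = 2 * pi / real q * real (p - 1)"
  define M where "M = sqrt (real p) * sqrt (sqnorm p v)"
  have "finite S"
    using assms(3) finite_subset by auto
  have "\<exists>z. cmod z \<le> 2 * pi / real q \<and>
      (\<lambda>k. z ^ k / fact k * dft p p (\<lambda>i. of_nat i ^ k * v i) s) sums dft q p v (prime_idx p q s)" for s
    by (rule dft_prime_idx_taylor[OF assms(1,2), of v s]) blast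
  then obtain z where z_bound: "\<And>s. cmod (z s) \<le> 2 * pi / real q"
    and z_sums: "\<And>s. (\<lambda>k. z s ^ k / fact k * dft p p (\<lambda>i. of_nat i ^ k * v i) s) sums dft q p v (prime_idx p q s)"
    by (metis (no_types))
  define t where "t k s = z s ^ Suc k / fact (Suc k) * dft p p (\<lambda>i. of_nat i ^ Suc k * v i) s" for k s
  have t_sums: "(\<lambda>k. t k s) sums (dft q p v (prime_idx p q s) - dft p p v s)" for s
    using z_sums[of s] unfolding t_def by (subst sums_Suc_iff) simp
  have "(\<lambda>k. a ^ k / fact k) sums exp a"
    using exp_converges[of a] by (simp add: divide_inverse mult.commute)
  then have bound_sums: "(\<lambda>k. M * (a ^ Suc k / fact (Suc k))) sums (M * (exp a - 1))"
    by (intro sums_mult) (subst sums_Suc_iff, simp)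
  have t_bound: "L2_set (\<lambda>s. cmod (t k s)) S \<le> M * (a ^ Suc k / fact (Suc k))" for k
    unfolding t_def M_def a_def using z_bound by (intro L2_set_dft_taylor_term_le[OF assms(3)]) auto
  have "L2_set (\<lambda>s. cmod (dft q p v (prime_idx p q s) - dft p p v s)) S \<le> M * (exp a - 1)"
    by (rule L2_set_sums_le[OF \<open>finite S\<close> t_sums bound_sums t_bound])
  then show ?thesis
    by (simp add: M_def a_def mult_ac)
qed

lemma sqnorm_restrict_FT:
  assumes "S \<subseteq> {..<N}"
  shows "sqnorm N (restrict_vec (FT N n v) S) = (L2_set (\<lambda>s. cmod (dft N n v s)) S)\<^sup>2 / real N"
proof -
  have "sqnorm N (restrict_vec (FT N n v) S) = (\<Sum>s\<in>S. (cmod (FT N n v s))\<^sup>2)"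
    by (rule sqnorm_restrict_vec[OF assms])
  also have "\<dots> = (\<Sum>s\<in>S. (cmod (dft N n v s))\<^sup>2 / real N)"
    using assms by (intro sum.cong refl) (auto simp: FT_eq_dft norm_divide power_divide)
  also have "\<dots> = (L2_set (\<lambda>s. cmod (dft N n v s)) S)\<^sup>2 / real N"
    by (simp add: L2_set_def sum_nonneg sum_divide_distrib)
  finally show ?thesis .
qed

lemma sqnorm_restrict_FT_prime_idx:
  assumes "0 < p" "p \<le> q" "S \<subseteq> {..<p}"
  shows "sqnorm q (restrict_vec (FT q p v) (prime_idx p q ` S))
           = (L2_set (\<lambda>s. cmod (dft q p v (prime_idx p q s))) S)\<^sup>2 / real q"
proof -
  have "prime_idx p q ` S \<subseteq> {..<q}"
    using assms prime_idx_less[of q] by auto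
  moreover have "inj_on (prime_idx p q) S"
    using inj_on_prime_idx[OF assms(2)] assms(3) by (rule inj_on_subset)
  then have "L2_set (\<lambda>c. cmod (dft q p v c)) (prime_idx p q ` S)
      = L2_set (\<lambda>s. cmod (dft q p v (prime_idx p q s))) S"
    by (simp add: L2_set_def sum.reindex)
  ultimately show ?thesis
    by (simp only: sqnorm_restrict_FT)
qed

lemma sqnorm_restrict_FT_le: "S \<subseteq> {..<N} \<Longrightarrow> sqnorm N (restrict_vec (FT N N v) S) \<le> sqnorm N v"
proof -
  assume "S \<subseteq> {..<N}"
  then have "sqnorm N (restrict_vec (FT N N v) S) \<le> (L2_set (\<lambda>s. cmod (dft N N v s)) {..<N})\<^sup>2 / real N"
    by (auto simp: sqnorm_restrict_FT intro!: divide_right_mono power_mono L2_set_mono2)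
  also have "\<dots> = sqnorm N v"
    by (cases "N = 0") (simp_all add: L2_set_def sum_nonneg dft_parseval sqnorm_def)
  finally show ?thesis .
qed

lemma sqnorm_restrict_FT_prime_idx_ge:
  fixes v :: "nat \<Rightarrow> complex"
  assumes "0 < p" "p \<le> q" "S \<subseteq> {..<p}"
  defines "\<epsilon> \<equiv> (exp (2 * pi * real (p - 1) / real q) - 1) * sqrt (sqnorm p v)"
  assumes "\<epsilon> \<le> sqrt (sqnorm p (restrict_vec (FT p p v) S))"
  shows "real p / real q * (sqrt (sqnorm p (restrict_vec (FT p p v) S)) - \<epsilon>)\<^sup>2
           \<le> sqnorm q (restrict_vec (FT q p v) (prime_idx p q ` S))"
proof -
  define A where "A = L2_set (\<lambda>s. cmod (dft p p v s)) S"
  define B where "B = L2_set (\<lambda>s. cmod (dft q p v (prime_idx p q s))) S"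
  define D where "D = L2_set (\<lambda>s. cmod (dft q p v (prime_idx p q s) - dft p p v s)) S"
  have sqrt_c: "sqrt (sqnorm p (restrict_vec (FT p p v) S)) = A / sqrt (real p)"
    using assms(3) by (simp add: A_def sqnorm_restrict_FT real_sqrt_divide)
  have "A \<le> L2_set (\<lambda>s. cmod (dft q p v (prime_idx p q s)) + cmod (dft q p v (prime_idx p q s) - dft p p v s)) S"
    unfolding A_def by (intro L2_set_mono) (metis norm_minus_commute norm_triangle_sub, simp)
  also have "\<dots> \<le> B + D"
    unfolding B_def D_def by (rule L2_set_triangle_ineq)
  also have "D \<le> sqrt (real p) * \<epsilon>"
    using L2_set_dft_prime_idx_diff_le[OF assms(1) _ assms(3)] assms(1,2) by (simp add: D_def \<epsilon>_def mult_ac)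
  finally have "sqrt (real p) * (A / sqrt (real p) - \<epsilon>) \<le> B"
    using assms(1) by (simp add: algebra_simps)
  then have "(sqrt (real p) * (A / sqrt (real p) - \<epsilon>))\<^sup>2 \<le> B\<^sup>2"
    using assms(5) sqrt_c by (intro power_mono) auto
  then have "real p * (A / sqrt (real p) - \<epsilon>)\<^sup>2 \<le> B\<^sup>2"
    by (simp add: power_mult_distrib)
  then show ?thesis
    using sqrt_c by (simp add: sqnorm_restrict_FT_prime_idx[OF assms(1-3)] B_def divide_right_mono)
qed

lemma exp_minus_one_le_divide:
  fixes a :: real
  assumes "0 \<le> a" "a < 1"
  shows "exp a - 1 \<le> a / (1 - a)"
proof -
  have "(1 - a) * exp a \<le> exp (- a) * exp a"
    using exp_ge_add_one_self[of "- a"] by (intro mult_right_mono) auto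
  then have "exp a \<le> 1 / (1 - a)"
    using assms by (simp add: exp_minus field_simps)
  then show ?thesis
    using assms by (simp add: field_simps)
qed

lemma phase_le_of_large_q:
  fixes \<delta> r c :: real and p q :: nat
  assumes "2 \<le> p" "0 < \<delta>" "\<delta> \<le> 1" "0 < r" "0 < c"
    and "real q > 3200 * r * ln (real p) / (\<delta> * sqrt c) * real p"
  shows "2 * pi * real (p - 1) / real q \<le> 189 / 64000 * sqrt c / r"
proof -
  have "2 / 3 \<le> ln (real p)"
    using ln2_ge_two_thirds ln_le_cancel_iff[of 2 "real p"] assms(1) by linarith
  then have "0 < 3200 * r * ln (real p) / (\<delta> * sqrt c) * real p"
    using assms(1,2,4,5) by (intro mult_pos_pos divide_pos_pos) auto
  then have "0 < real q"
    using assms(6) by linarith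
  have "3200 * r * (2 / 3) * real p \<le> 3200 * r * ln (real p) * real p"
    using \<open>2 / 3 \<le> ln (real p)\<close> assms(4) by (intro mult_right_mono mult_left_mono) auto
  also have "\<dots> < real q * (\<delta> * sqrt c)"
    using assms(2,5,6) by (simp add: field_simps)
  also have "\<dots> \<le> real q * sqrt c"
    using assms(3,5) \<open>0 < real q\<close> by (intro mult_left_mono) auto
  finally have pq: "real p / real q < 3 * sqrt c / (6400 * r)"
    using \<open>0 < real q\<close> assms(4) by (simp add: field_simps)
  have "2 * pi * real (p - 1) / real q \<le> 2 * pi * (real p / real q)"
    by (simp add: divide_right_mono)
  also have "\<dots> \<le> 63 / 10 * (real p / real q)"
    using pi_approx by (intro mult_right_mono) auto
  also have "\<dots> \<le> 63 / 10 * (3 * sqrt c / (6400 * r))"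
    using pq by simp
  finally show ?thesis
    by simp
qed

lemma exp_phase_error_le:
  fixes \<delta> r c :: real and p q :: nat
  assumes "0 < p" "0 < \<delta>" "\<delta> \<le> 1" "1 < 100 * r" "0 < c" "c \<le> 1"
    and "real q > 3200 * r * ln (real p) / (\<delta> * sqrt c) * real p"
  shows "exp (2 * pi * real (p - 1) / real q) - 1 \<le> sqrt c / (200 * r)"
proof (cases "p = 1")
  case True
  then show ?thesis
    using assms by simp
next
  case False
  define a where "a = 2 * pi * real (p - 1) / real q"
  have "0 < r" "0 < sqrt c" "sqrt c \<le> 1"
    using assms by auto
  have a_le: "a \<le> 189 / 64000 * sqrt c / r"
    unfolding a_def using False assms \<open>0 < r\<close> by (intro phase_le_of_large_q) auto
  have "0 \<le> a"
    by (simp add: a_def)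
  have "189 / 64000 * sqrt c / r \<le> 189 / 64000 * 1 / r"
    using \<open>sqrt c \<le> 1\<close> \<open>0 < r\<close> by (intro divide_right_mono mult_left_mono) auto
  also have "\<dots> < 3 / 10"
    using assms(4) by (simp add: field_simps)
  finally have "a < 3 / 10"
    using a_le by linarith
  have "exp a - 1 \<le> a / (1 - a)"
    using \<open>0 \<le> a\<close> \<open>a < 3 / 10\<close> by (intro exp_minus_one_le_divide) auto
  also have "\<dots> \<le> a / (7 / 10)"
    using \<open>0 \<le> a\<close> \<open>a < 3 / 10\<close> by (intro divide_left_mono) auto
  also have "\<dots> \<le> (189 / 64000 * sqrt c / r) / (7 / 10)"
    using a_le by (rule divide_right_mono) simp
  also have "\<dots> \<le> sqrt c / (200 * r)"
    using \<open>0 < r\<close> \<open>0 < sqrt c\<close> by (simp add: field_simps)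
  finally show ?thesis
    unfolding a_def .
qed

lemma sqrt_minus_small_square_ge:
  fixes \<delta> r c \<epsilon> :: real
  assumes "0 \<le> \<delta>" "\<delta> \<le> 1" "1 < 100 * r" "0 \<le> c" "\<epsilon> \<le> sqrt c / (200 * r)"
  shows "\<epsilon> \<le> sqrt c" and "\<delta>\<^sup>2 * (1 - 1 / (100 * r)) * c \<le> (sqrt c - \<epsilon>)\<^sup>2"
proof -
  define x where "x = 1 / (200 * r)"
  have "0 < x" "2 * x < 1"
    using assms(3) by (auto simp: x_def field_simps)
  have "\<epsilon> \<le> x * sqrt c"
    using assms(5) by (simp add: x_def)
  moreover have "x * sqrt c \<le> sqrt c"
    using \<open>2 * x < 1\<close> \<open>0 < x\<close> assms(4) by (simp add: mult_left_le_one_le)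
  ultimately show "\<epsilon> \<le> sqrt c"
    by linarith
  have "\<delta>\<^sup>2 * (1 - 1 / (100 * r)) * c \<le> (1 - 2 * x) * c"
    using assms(1-4) \<open>2 * x < 1\<close> power_le_one[of \<delta> 2]
    by (intro mult_right_mono) (auto simp: x_def intro: mult_le_one)
  also have "\<dots> \<le> (1 - x)\<^sup>2 * c"
    using assms(4) by (intro mult_right_mono) (auto simp: power2_eq_square algebra_simps)
  also have "\<dots> = (sqrt c - x * sqrt c)\<^sup>2"
    using assms(4) by (simp add: power2_eq_square algebra_simps)
  also have "\<dots> \<le> (sqrt c - \<epsilon>)\<^sup>2"
    using \<open>\<epsilon> \<le> x * sqrt c\<close> \<open>x * sqrt c \<le> sqrt c\<close> by (intro power_mono) auto
  finally show "\<delta>\<^sup>2 * (1 - 1 / (100 * r)) * c \<le> (sqrt c - \<epsilon>)\<^sup>2" .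
qed

theorem lemma2:
  fixes p q :: nat and \<alpha> :: "nat \<Rightarrow> complex" and S :: "nat set"
    and \<delta> r c :: real
  assumes "0 < p" and "p < q"
    and "sqnorm p \<alpha> = 1"
    and "S \<subseteq> {..<p}"
    and "0 < \<delta>" and "\<delta> \<le> 1" and "0 < r"
    and "delta_uniform p \<delta> (restrict_vec (FT p p \<alpha>) S)"
    and "sqnorm p (restrict_vec (FT p p \<alpha>) S) = c"
    and "real q > (3200 * r * ln (real p) / (\<delta> * sqrt c)) * real p"
  shows "sqnorm q (restrict_vec (FT q p \<alpha>) (prime_idx p q ` S))
           \<ge> real p / real q * \<delta>\<^sup>2 * (1 - 1 / (100 * r)) * c"
proof (cases "1 < 100 * r \<and> 0 < c")
  case True
  define \<epsilon> where "\<epsilon> = exp (2 * pi * real (p - 1) / real q) - 1"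
  have "c \<le> 1"
    using sqnorm_restrict_FT_le[OF assms(4), of \<alpha>] assms(3,9) by simp
  then have "\<epsilon> \<le> sqrt c / (200 * r)"
    using True assms unfolding \<epsilon>_def by (intro exp_phase_error_le) auto
  then have "\<epsilon> \<le> sqrt c" and "\<delta>\<^sup>2 * (1 - 1 / (100 * r)) * c \<le> (sqrt c - \<epsilon>)\<^sup>2"
    using True assms(5,6) by (intro sqrt_minus_small_square_ge; simp)+
  then have "real p / real q * (\<delta>\<^sup>2 * (1 - 1 / (100 * r)) * c) \<le> real p / real q * (sqrt c - \<epsilon>)\<^sup>2"
    by (intro mult_left_mono) auto
  also have "\<dots> \<le> sqnorm q (restrict_vec (FT q p \<alpha>) (prime_idx p q ` S))"
    using sqnorm_restrict_FT_prime_idx_ge[OF assms(1) less_imp_le[OF assms(2)] assms(4), of \<alpha>]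
      \<open>\<epsilon> \<le> sqrt c\<close> assms(3,9) by (simp add: \<epsilon>_def)
  finally show ?thesis
    by (simp add: mult.assoc)
next
  case False
  have "0 \<le> c"
    using sqnorm_nonneg assms(9) by metis
  with False assms(7) have "(1 - 1 / (100 * r)) * c \<le> 0"
    by (cases "c = 0") (auto intro!: mult_nonpos_nonneg simp: field_simps)
  then have "real p / real q * \<delta>\<^sup>2 * ((1 - 1 / (100 * r)) * c) \<le> 0"
    by (rule mult_nonneg_nonpos[rotated]) simp
  then show ?thesis
    using sqnorm_nonneg[of q "restrict_vec (FT q p \<alpha>) (prime_idx p q ` S)"] by (simp add: mult.assoc)
qed

end
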